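(* Let $X$ be a real reflexive Banach space and $\varepsilon\in[0,2)$. Then a functional $f\in X^*\setminus\{\theta\}$ is $\varepsilon$-smooth (as an element of the normed space $X^*$) if and only if $\operatorname{diam} M_f^+\le\varepsilon$, where $M_f^+=\{x\in S_X: f(x)=\|f\|\}$.
   Context: For a normed space $Z$ and $z\in Z\setminus\{\theta\}$, $J(z)=\{\phi\in S_{Z^*}:\phi(z)=\|z\|\}$, and $z$ is called $\varepsilon$-smooth if $\operatorname{diam}J(z)\le\varepsilon$, where $\operatorname{diam}A=\sup_{a,b\in A}\|a-b\|$. Here this is applied with $Z=X^*$, so $J(f)\subset S_{X^{**}}$. $S_X$ denotes the unit sphere of $X$. *)

theory Defs
  imports "HOL-Analysis.Analysis"
begin

(* Dual space X* is the type 'a =>L real with operator norm; bidual is ('a =>L real) =>L real. *)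

definition evaluation_map :: "'a::real_normed_vector \<Rightarrow> (('a \<Rightarrow>\<^sub>L real) \<Rightarrow>\<^sub>L real)" where
  "evaluation_map x = Blinfun (\<lambda>f. blinfun_apply f x)"

definition reflexive_space :: "'a::real_normed_vector itself \<Rightarrow> bool" where
  "reflexive_space _ \<longleftrightarrow> surj (evaluation_map :: 'a \<Rightarrow> (('a \<Rightarrow>\<^sub>L real) \<Rightarrow>\<^sub>L real))"

definition unit_sphere :: "'a::real_normed_vector set" where
  "unit_sphere = {x. norm x = 1}"

definition duality_set :: "'a::real_normed_vector \<Rightarrow> ('a \<Rightarrow>\<^sub>L real) set" where
  "duality_set z = {\<phi>. norm \<phi> = 1 \<and> blinfun_apply \<phi> z = norm z}"

definition diam :: "'a::real_normed_vector set \<Rightarrow> real" where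
  "diam A = (SUP p\<in>A \<times> A. norm (fst p - snd p))"

definition eps_smooth :: "real \<Rightarrow> 'a::real_normed_vector \<Rightarrow> bool" where
  "eps_smooth \<epsilon> z \<longleftrightarrow> diam (duality_set z) \<le> \<epsilon>"

definition M_plus :: "('a::real_normed_vector \<Rightarrow>\<^sub>L real) \<Rightarrow> 'a set" where
  "M_plus f = {x \<in> unit_sphere. blinfun_apply f x = norm f}"

end

(* Only reflexivity matters.  The evaluation map X \<rightarrow> X** is a linear isometry (the isometry
   needs a norming functional, i.e. the Hahn-Banach theorem), and a functional \<Phi> = eval x lies
   in J(f) exactly when x lies in M_f^+.  So for reflexive X the map carries M_f^+ onto J(f)
   preserving distances, and the two sets have the same diameter.

   Hahn-Banach is proved via minimal sublinear functionals.  The pointwise infimum of a chain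
   of sublinear functionals is sublinear, so by Zorn every sublinear q lies above a minimal
   sublinear p.  For each y, reduct p y x = inf_{t \<ge> 0} (p (x + t y) - t p y) is again sublinear
   and below p, hence equal to p; taking t = 1 gives p x + p y \<le> p (x + y), so p is linear.
   Applied below reduct q y this gives a linear f \<le> q with f y = q y, and for q = norm a
   norming functional of y. *)

theory Submission
  imports Defs
begin

definition sublinear :: "('a::real_vector \<Rightarrow> real) \<Rightarrow> bool" where
  "sublinear p \<longleftrightarrow> (\<forall>x y. p (x + y) \<le> p x + p y) \<and> (\<forall>c x. 0 \<le> c \<longrightarrow> p (c *\<^sub>R x) = c * p x)"

lemma sublinear_add: "sublinear p \<Longrightarrow> p (x + y) \<le> p x + p y"
  by (simp add: sublinear_def)

lemma sublinear_scaleR: "sublinear p \<Longrightarrow> 0 \<le> c \<Longrightarrow> p (c *\<^sub>R x) = c * p x"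
  by (simp add: sublinear_def)

lemma sublinear_zero: "sublinear p \<Longrightarrow> p 0 = 0"
  using sublinear_scaleR[of p 0 0] by simp

lemma sublinear_neg_le: "sublinear p \<Longrightarrow> - p (- x) \<le> p x"
  using sublinear_add[of p x "- x"] sublinear_zero[of p] by simp

lemma sublinearI:
  fixes p :: "'a::real_vector \<Rightarrow> real"
  assumes add: "\<And>x y. p (x + y) \<le> p x + p y"
    and scale: "\<And>c x. 0 < c \<Longrightarrow> p (c *\<^sub>R x) \<le> c * p x"
  shows "sublinear p"
proof -
  have "p 0 \<le> p 0 + p 0" using add[of 0 0] by simp
  moreover have "p 0 \<le> p 0 / 2" using scale[of "1/2" 0] by simp
  ultimately have p0: "p 0 = 0" by linarith
  have "p (c *\<^sub>R x) = c * p x" if "0 < c" for c x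
  proof (rule antisym)
    show "p (c *\<^sub>R x) \<le> c * p x" using scale[OF that] .
    have "p x = p (inverse c *\<^sub>R (c *\<^sub>R x))" using that by simp
    also have "\<dots> \<le> inverse c * p (c *\<^sub>R x)" using scale[of "inverse c" "c *\<^sub>R x"] that by simp
    finally show "c * p x \<le> p (c *\<^sub>R x)" using that by (simp add: field_simps)
  qed
  with p0 show ?thesis
    unfolding sublinear_def by (metis add less_eq_real_def mult_zero_left scale_zero_left)
qed

lemma sublinear_norm: "sublinear (norm :: 'a::real_normed_vector \<Rightarrow> real)"
  unfolding sublinear_def by (auto simp: norm_triangle_ineq)

definition reduct :: "('a::real_vector \<Rightarrow> real) \<Rightarrow> 'a \<Rightarrow> 'a \<Rightarrow> real" where
  "reduct p y x = (INF t\<in>{0..}. p (x + t *\<^sub>R y) - t * p y)"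

lemma reduct_le:
  assumes "sublinear p" "0 \<le> t"
  shows "reduct p y x \<le> p (x + t *\<^sub>R y) - t * p y"
  unfolding reduct_def
proof (rule cINF_lower)
  show "bdd_below ((\<lambda>t. p (x + t *\<^sub>R y) - t * p y) ` {0..})"
  proof (rule bdd_belowI2)
    fix s :: real assume "s \<in> {0..}"
    then have "s * p y \<le> p (x + s *\<^sub>R y) + p (- x)"
      using sublinear_add[OF assms(1), of "x + s *\<^sub>R y" "- x"] sublinear_scaleR[OF assms(1)] by simp
    then show "- p (- x) \<le> p (x + s *\<^sub>R y) - s * p y" by simp
  qed
qed (use assms(2) in simp)

lemma le_reduct:
  assumes "\<And>t. 0 \<le> t \<Longrightarrow> a \<le> p (x + t *\<^sub>R y) - t * p y"
  shows "a \<le> reduct p y x"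
  unfolding reduct_def by (rule cINF_greatest) (use assms in auto)

lemma reduct_le_self: "sublinear p \<Longrightarrow> reduct p y x \<le> p x"
  using reduct_le[of p 0 y x] by simp

lemma sublinear_reduct:
  assumes p: "sublinear p"
  shows "sublinear (reduct p y)"
proof (rule sublinearI)
  fix x1 x2
  have "reduct p y (x1 + x2) - (p (x2 + t2 *\<^sub>R y) - t2 * p y) \<le> reduct p y x1"
    if t2: "0 \<le> t2" for t2
  proof (rule le_reduct)
    fix t1 :: real assume t1: "0 \<le> t1"
    have "reduct p y (x1 + x2) \<le> p (x1 + x2 + (t1 + t2) *\<^sub>R y) - (t1 + t2) * p y"
      using reduct_le[OF p, of "t1 + t2"] t1 t2 by simp
    also have "x1 + x2 + (t1 + t2) *\<^sub>R y = (x1 + t1 *\<^sub>R y) + (x2 + t2 *\<^sub>R y)"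
      by (simp add: algebra_simps)
    also have "p \<dots> \<le> p (x1 + t1 *\<^sub>R y) + p (x2 + t2 *\<^sub>R y)"
      by (rule sublinear_add[OF p])
    finally show "reduct p y (x1 + x2) - (p (x2 + t2 *\<^sub>R y) - t2 * p y)
        \<le> p (x1 + t1 *\<^sub>R y) - t1 * p y"
      by (simp add: algebra_simps)
  qed
  then have "reduct p y (x1 + x2) - reduct p y x1 \<le> reduct p y x2"
    by (intro le_reduct) (simp add: algebra_simps)
  then show "reduct p y (x1 + x2) \<le> reduct p y x1 + reduct p y x2" by simp
next
  fix c :: real and x
  assume c: "0 < c"
  have "reduct p y (c *\<^sub>R x) / c \<le> reduct p y x"
  proof (rule le_reduct)
    fix t :: real assume t: "0 \<le> t"
    have "reduct p y (c *\<^sub>R x) \<le> p (c *\<^sub>R x + (c * t) *\<^sub>R y) - (c * t) * p y"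
      using reduct_le[OF p, of "c * t"] t c by simp
    also have "\<dots> = c * (p (x + t *\<^sub>R y) - t * p y)"
      using sublinear_scaleR[OF p, of c "x + t *\<^sub>R y"] c by (simp add: algebra_simps)
    finally show "reduct p y (c *\<^sub>R x) / c \<le> p (x + t *\<^sub>R y) - t * p y"
      using c by (simp add: divide_le_eq mult.commute)
  qed
  then show "reduct p y (c *\<^sub>R x) \<le> c * reduct p y x"
    using c by (simp add: divide_le_eq mult.commute)
qed

lemma linear_if_minimal_sublinear:
  assumes p: "sublinear p"
    and minimal: "\<And>p'. sublinear p' \<Longrightarrow> p' \<le> p \<Longrightarrow> p' = p"
  shows "linear p"
proof -
  have add: "p (x + y) = p x + p y" for x y
  proof -
    have "reduct p y \<le> p" using reduct_le_self[OF p] by (rule le_funI)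
    then have "reduct p y = p" using minimal sublinear_reduct[OF p] by blast
    then have "p x \<le> p (x + y) - p y" using reduct_le[OF p, of 1 y x] by simp
    then show ?thesis using sublinear_add[OF p, of x y] by simp
  qed
  have neg: "p (- x) = - p x" for x
    using add[of x "- x"] sublinear_zero[OF p] by simp
  show ?thesis
  proof (rule linearI)
    show "p (r *\<^sub>R x) = r *\<^sub>R p x" for r x
    proof (cases "0 \<le> r")
      case False
      have "p (r *\<^sub>R x) = - p ((- r) *\<^sub>R x)" using neg[of "(- r) *\<^sub>R x"] by simp
      then show ?thesis using sublinear_scaleR[OF p, of "- r" x] False by simp
    qed (simp add: sublinear_scaleR[OF p])
  qed (rule add)
qed

lemma bdd_below_sublinear_chain:
  assumes "p0 \<in> C" "\<And>p. p \<in> C \<Longrightarrow> sublinear p"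
    and chain: "\<And>p p'. p \<in> C \<Longrightarrow> p' \<in> C \<Longrightarrow> p \<le> p' \<or> p' \<le> p"
  shows "bdd_below ((\<lambda>p. p x) ` C)"
proof (rule bdd_belowI2)
  fix p assume "p \<in> C"
  then consider "p0 \<le> p" | "p \<le> p0" using chain assms(1) by blast
  then show "- p0 (- x) \<le> p x"
  proof cases
    case 1
    have "- p0 (- x) \<le> p0 x" using sublinear_neg_le assms(1,2) by blast
    also have "\<dots> \<le> p x" using 1 by (rule le_funD)
    finally show ?thesis .
  next
    case 2
    have "- p0 (- x) \<le> - p (- x)" using 2 by (simp add: le_funD)
    also have "\<dots> \<le> p x" using sublinear_neg_le assms(2) \<open>p \<in> C\<close> by blast
    finally show ?thesis .
  qed
qed

lemma sublinear_INF_chain: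
  assumes "C \<noteq> {}" and sub: "\<And>p. p \<in> C \<Longrightarrow> sublinear p"
    and chain: "\<And>p p'. p \<in> C \<Longrightarrow> p' \<in> C \<Longrightarrow> p \<le> p' \<or> p' \<le> p"
  shows "sublinear (\<lambda>x. INF p\<in>C. p x)" (is "sublinear ?u")
proof -
  obtain p0 where "p0 \<in> C" using assms(1) by blast
  have u_le: "?u x \<le> p x" if "p \<in> C" for p x
    using bdd_below_sublinear_chain[OF \<open>p0 \<in> C\<close> sub chain] that by (intro cINF_lower)
  have le_u: "a \<le> ?u x" if "\<And>p. p \<in> C \<Longrightarrow> a \<le> p x" for a x
    using assms(1) that by (intro cINF_greatest)
  show ?thesis
  proof (rule sublinearI)
    fix x y
    have "?u (x + y) - p2 y \<le> ?u x" if p2: "p2 \<in> C" for p2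
    proof (rule le_u)
      fix p1 assume p1: "p1 \<in> C"
      obtain p where p: "p \<in> C" "p \<le> p1" "p \<le> p2" using chain[OF p1 p2] p1 p2 by blast
      have "?u (x + y) \<le> p (x + y)" using u_le[OF p(1)] .
      also have "\<dots> \<le> p x + p y" using sublinear_add[OF sub[OF p(1)]] .
      also have "\<dots> \<le> p1 x + p2 y" using p(2,3) by (simp add: add_mono le_fun_def)
      finally show "?u (x + y) - p2 y \<le> p1 x" by simp
    qed
    then have "?u (x + y) - ?u x \<le> ?u y"
      by (intro le_u) (simp add: algebra_simps)
    then show "?u (x + y) \<le> ?u x + ?u y" by simp
  next
    fix c :: real and x
    assume c: "0 < c"
    have "?u (c *\<^sub>R x) / c \<le> ?u x"
    proof (rule le_u)
      fix p assume "p \<in> C"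
      have "?u (c *\<^sub>R x) \<le> c * p x"
        using u_le[OF \<open>p \<in> C\<close>, of "c *\<^sub>R x"] sublinear_scaleR[OF sub[OF \<open>p \<in> C\<close>], of c x] c
        by simp
      then show "?u (c *\<^sub>R x) / c \<le> p x" using c by (simp add: divide_le_eq mult.commute)
    qed
    then show "?u (c *\<^sub>R x) \<le> c * ?u x" using c by (simp add: divide_le_eq mult.commute)
  qed
qed

lemma exists_minimal_sublinear_below:
  assumes "sublinear q"
  shows "\<exists>p. sublinear p \<and> p \<le> q \<and> (\<forall>p'. sublinear p' \<longrightarrow> p' \<le> p \<longrightarrow> p' = p)"
proof -
  define A where "A = {p. sublinear p \<and> p \<le> q}"
  define P where "P = (\<lambda>a b :: 'a \<Rightarrow> real. b \<le> a)"
  have po: "partial_order_on A (relation_of P A)"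
    unfolding partial_order_on_def preorder_on_def refl_on_def trans_def antisym_def
      relation_of_def P_def by auto
  have chain_bound: "\<exists>u\<in>A. \<forall>p\<in>C. P p u" if C: "C \<in> Chains (relation_of P A)" for C
  proof (cases "C = {}")
    case True
    then show ?thesis using assms unfolding A_def by auto
  next
    case False
    then obtain p0 where "p0 \<in> C" by blast
    have CA: "C \<subseteq> A" and chain: "\<And>p p'. p \<in> C \<Longrightarrow> p' \<in> C \<Longrightarrow> p \<le> p' \<or> p' \<le> p"
      using C unfolding Chains_def relation_of_def P_def by auto
    then have sub: "\<And>p. p \<in> C \<Longrightarrow> sublinear p" unfolding A_def by auto
    define u where "u = (\<lambda>x. INF p\<in>C. p x)"
    have "u \<le> p" if "p \<in> C" for p
      unfolding u_def le_fun_def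
      using bdd_below_sublinear_chain[OF \<open>p0 \<in> C\<close> sub chain] that by (auto intro: cINF_lower)
    moreover have "p0 \<le> q" using CA \<open>p0 \<in> C\<close> unfolding A_def by auto
    ultimately have "u \<in> A"
      using sublinear_INF_chain[OF False sub chain] \<open>p0 \<in> C\<close>
      unfolding A_def u_def by (auto intro: order_trans)
    then show ?thesis using \<open>\<And>p. p \<in> C \<Longrightarrow> u \<le> p\<close> unfolding P_def by blast
  qed
  obtain m where "m \<in> A" "\<forall>p\<in>A. P m p \<longrightarrow> p = m"
    using predicate_Zorn[OF po chain_bound] by blast
  then show ?thesis unfolding A_def P_def by (auto intro: order_trans)
qed

lemma exists_linear_below_sublinear:
  assumes q: "sublinear q"
  shows "\<exists>f. linear f \<and> (\<forall>x. f x \<le> q x) \<and> f y = q y"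
proof -
  obtain p where p: "sublinear p" "p \<le> reduct q y"
    and minimal: "\<And>p'. sublinear p' \<Longrightarrow> p' \<le> p \<Longrightarrow> p' = p"
    using exists_minimal_sublinear_below[OF sublinear_reduct[OF q]] by blast
  have lin: "linear p" using linear_if_minimal_sublinear[OF p(1) minimal] .
  have p_le: "p x \<le> q x" for x
    using p(2) reduct_le_self[OF q] by (metis le_funD order_trans)
  have "- p y = p (- y)" using linear_neg[OF lin] by simp
  also have "\<dots> \<le> reduct q y (- y)" using p(2) by (simp add: le_fun_def)
  also have "\<dots> \<le> - q y" using reduct_le[OF q, of 1 y "- y"] by (simp add: sublinear_zero[OF q])
  finally have "p y = q y" using p_le[of y] by simp
  with lin p_le show ?thesis by blast
qed

lemma norming_functional:
  fixes z :: "'a::real_normed_vector"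
  obtains g :: "'a \<Rightarrow>\<^sub>L real" where "norm g \<le> 1" "blinfun_apply g z = norm z"
proof -
  obtain f where lin: "linear f" and f_le: "\<And>x. f x \<le> norm x" and fz: "f z = norm z"
    using exists_linear_below_sublinear[OF sublinear_norm] by blast
  have f_abs: "\<bar>f x\<bar> \<le> norm x" for x
    using f_le[of x] f_le[of "- x"] linear_neg[OF lin, of x] by simp
  have bl: "bounded_linear f"
    using lin f_abs by (intro bounded_linear_intro[where K = 1]) (auto simp: linear_add linear_scale)
  show thesis
  proof
    show "norm (Blinfun f) \<le> 1"
      using f_abs by (intro norm_blinfun_bound) (auto simp: bounded_linear_Blinfun_apply[OF bl])
    show "blinfun_apply (Blinfun f) z = norm z"
      by (simp add: bounded_linear_Blinfun_apply[OF bl] fz)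
  qed
qed

lemma evaluation_map_apply: "blinfun_apply (evaluation_map x) g = blinfun_apply g x"
  unfolding evaluation_map_def
  by (simp add: bounded_linear_Blinfun_apply blinfun.bounded_linear_left)

lemma evaluation_map_diff: "evaluation_map (x - y) = evaluation_map x - evaluation_map y"
  by (rule blinfun_eqI) (simp add: evaluation_map_apply blinfun.diff_right blinfun.diff_left)

lemma norm_evaluation_map: "norm (evaluation_map x) = norm x"
proof (rule antisym)
  show "norm (evaluation_map x) \<le> norm x"
    using norm_blinfun[of _ x]
    by (intro norm_blinfun_bound) (simp_all add: evaluation_map_apply mult.commute del: real_norm_def)
  obtain g :: "'a \<Rightarrow>\<^sub>L real" where g: "norm g \<le> 1" "blinfun_apply g x = norm x"
    using norming_functional .
  have "norm x \<le> norm (evaluation_map x) * norm g"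
    using norm_blinfun[of "evaluation_map x" g] g(2) by (simp add: evaluation_map_apply)
  also have "\<dots> \<le> norm (evaluation_map x)" using g(1) by (simp add: mult_left_le)
  finally show "norm x \<le> norm (evaluation_map x)" .
qed

lemma duality_set_eq_evaluation_map_image:
  assumes "surj (evaluation_map :: 'a::real_normed_vector \<Rightarrow> _)"
  shows "duality_set f = evaluation_map ` M_plus (f :: 'a \<Rightarrow>\<^sub>L real)"
proof -
  have mem: "evaluation_map x \<in> duality_set f \<longleftrightarrow> x \<in> M_plus f" for x :: 'a
    unfolding duality_set_def M_plus_def unit_sphere_def
    by (simp add: norm_evaluation_map evaluation_map_apply)
  show ?thesis
  proof
    show "duality_set f \<subseteq> evaluation_map ` M_plus f"
    proof
      fix \<phi> assume "\<phi> \<in> duality_set f"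
      moreover obtain x where "\<phi> = evaluation_map x" using surjD[OF assms] by blast
      ultimately show "\<phi> \<in> evaluation_map ` M_plus f" using mem by blast
    qed
  qed (use mem in blast)
qed

lemma diam_isometric_image:
  assumes "\<And>x y. norm (g x - g y) = norm (x - y)"
  shows "diam (g ` A) = diam A"
proof -
  have "g ` A \<times> g ` A = map_prod g g ` (A \<times> A)"
    by (simp add: map_prod_surj_on)
  then have "(\<lambda>p. norm (fst p - snd p)) ` (g ` A \<times> g ` A) = (\<lambda>p. norm (fst p - snd p)) ` (A \<times> A)"
    by (simp add: image_image assms)
  then show ?thesis unfolding diam_def by simp
qed

theorem lemma2p4:
  fixes f :: "'a::banach \<Rightarrow>\<^sub>L real" and \<epsilon> :: real
  assumes "reflexive_space TYPE('a)"
    and "0 \<le> \<epsilon>" and "\<epsilon> < 2"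
    and "f \<noteq> 0"
  shows "eps_smooth \<epsilon> f \<longleftrightarrow> diam (M_plus f) \<le> \<epsilon>"
proof -
  have "surj (evaluation_map :: 'a \<Rightarrow> _)"
    using assms(1) unfolding reflexive_space_def .
  then have "diam (duality_set f) = diam (evaluation_map ` M_plus f)"
    by (simp add: duality_set_eq_evaluation_map_image)
  also have "\<dots> = diam (M_plus f)"
    by (rule diam_isometric_image) (simp add: evaluation_map_diff[symmetric] norm_evaluation_map)
  finally show ?thesis unfolding eps_smooth_def by simp
qed

end
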